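(* Let $p>1$ and let $(\mathcal{X},\mathcal{F},\{\mathcal{F}_n\}_{n\ge0},\mu)$ be a discrete-time filtered probability space. For all $\mathbf{f}\ge0$ and $F\ge\mathbf{f}^p$, $$\widetilde{\mathcal{B}}^{\mathcal{F}}_\mu(F,\mathbf{f})\le\mathcal{B}^{\mathcal{F}}_\mu(F,\mathbf{f},1;1).$$ Moreover, if $\{\mathcal{F}_n\}_{n\ge0}$ is an infinitely refining filtration, then $\widetilde{\mathcal{B}}^{\mathcal{F}}_\mu(F,\mathbf{f})=\mathcal{B}^{\mathcal{F}}_\mu(F,\mathbf{f},1;1)$ (which by the coincidence theorem also equals the dyadic Bellman function $\mathcal{B}(F,\mathbf{f},1;1)$).
   Context: $f_n=\mathbb{E}^\mu[f\mid\mathcal{F}_n]$, $f^*=\sup_{n\ge0}|f_n|$. $\widetilde{\mathcal{B}}^{\mathcal{F}}_\mu(F,\mathbf{f})=\sup\{\mathbb{E}^\mu[|f^*|^p]: f\ge0,\ \mathbb{E}^\mu[f^p]=F,\ \mathbb{E}^\mu[f]=\mathbf{f}\}$. $\mathcal{B}^{\mathcal{F}}_\mu(F,\mathbf{f},M;C)$ is the supremum of $\mathbb{E}^\mu[\sum_{n\ge0}\alpha_nf_n^p]$ over all non-negative $f$ and all sequences of non-negative random variables $\{\alpha_n\}$ with $\alpha_n$ $\mathcal{F}_n$-measurable and $\mathbb{E}^\mu[\sum_{k\ge n}\alpha_k\mid\mathcal{F}_n]\le C$ for all $n$, such that $\mathbb{E}^\mu[f^p]=F$, $\mathbb{E}^\mu[f]=\mathbf{f}$,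 $\mathbb{E}^\mu[\sum_n\alpha_n]=M$. The dyadic Bellman function $\mathcal{B}(F,\mathbf{f},M;C)$ is the supremum of $|I|^{-1}\sum_{J\in\mathcal{D},J\subseteq I}\alpha_J\langle f\rangle_J^p$ over non-negative $f$ on a dyadic interval $I$ and non-negative $\{\alpha_J\}$ with $\langle f^p\rangle_I=F$, $\langle f\rangle_I=\mathbf{f}$, $|I|^{-1}\sum_{J\subseteq I}\alpha_J=M$, $\sum_{J'\subseteq J}\alpha_{J'}\le C|J|$ for all dyadic $J\subseteq I$. The filtration is infinitely refining if for every $\varepsilon>0$, $n\ge0$, $E\in\mathcal{F}_n$ there exist $k>n$ and real-valued $\mathcal{F}_k$-measurable $h$ with $|h\mathbf{1}_E|=\mathbf{1}_E$ and $\int_E|\mathbb{E}^\mu[h\mid\mathcal{F}_n]|\,d\mu\le\varepsilon$. *)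

theory Defs
  imports "HOL-Probability.Probability"
begin

definition discrete_filtration :: "'a measure \<Rightarrow> (nat \<Rightarrow> 'a measure) \<Rightarrow> bool" where
  "discrete_filtration M F \<longleftrightarrow>
     (\<forall>n. subalgebra M (F n)) \<and> (\<forall>n. sets (F n) \<subseteq> sets (F (Suc n)))"

text \<open>Since t -> t^p is increasing and continuous, (sup_n |f_n|)^p = sup_n |f_n|^p.\<close>
definition max_bellman ::
    "'a measure \<Rightarrow> (nat \<Rightarrow> 'a measure) \<Rightarrow> real \<Rightarrow> real \<Rightarrow> real \<Rightarrow> ennreal" where
  "max_bellman M F p FF ff =
     Sup {(\<integral>\<^sup>+ x. (SUP n. ennreal (\<bar>real_cond_exp M (F n) f x\<bar> powr p)) \<partial>M) | f.
            f \<in> borel_measurable M \<and> (\<forall>x\<in>space M. 0 \<le> f x) \<and>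
            (\<integral>\<^sup>+ x. ennreal (f x powr p) \<partial>M) = ennreal FF \<and>
            (\<integral>\<^sup>+ x. ennreal (f x) \<partial>M) = ennreal ff}"

definition carleson_bellman ::
    "'a measure \<Rightarrow> (nat \<Rightarrow> 'a measure) \<Rightarrow> real \<Rightarrow> real \<Rightarrow> real \<Rightarrow> real \<Rightarrow> real \<Rightarrow> ennreal" where
  "carleson_bellman M F p FF ff MM C =
     Sup {(\<integral>\<^sup>+ x. (\<Sum>n. ennreal (\<alpha> n x * \<bar>real_cond_exp M (F n) f x\<bar> powr p)) \<partial>M) | f \<alpha>.
            f \<in> borel_measurable M \<and> (\<forall>x\<in>space M. 0 \<le> f x) \<and>
            (\<forall>n. \<alpha> n \<in> borel_measurable (F n)) \<and> (\<forall>n. \<forall>x\<in>space M. 0 \<le> \<alpha> n x) \<and>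
            (\<forall>n. AE x in M. nn_cond_exp M (F n) (\<lambda>y. \<Sum>k. ennreal (\<alpha> (n + k) y)) x \<le> ennreal C) \<and>
            (\<integral>\<^sup>+ x. ennreal (f x powr p) \<partial>M) = ennreal FF \<and>
            (\<integral>\<^sup>+ x. ennreal (f x) \<partial>M) = ennreal ff \<and>
            (\<integral>\<^sup>+ x. (\<Sum>n. ennreal (\<alpha> n x)) \<partial>M) = ennreal MM}"

definition infinitely_refining :: "'a measure \<Rightarrow> (nat \<Rightarrow> 'a measure) \<Rightarrow> bool" where
  "infinitely_refining M F \<longleftrightarrow>
     (\<forall>\<epsilon>>0. \<forall>n. \<forall>E\<in>sets (F n). \<exists>k>n. \<exists>h::'a \<Rightarrow> real.
        h \<in> borel_measurable (F k) \<and> integrable M h \<and>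
        (\<forall>x\<in>space M. \<bar>h x * indicator E x\<bar> = indicator E x) \<and>
        (\<integral>x\<in>E. \<bar>real_cond_exp M (F n) h x\<bar> \<partial>M) \<le> \<epsilon>)"

end

(*
  Both inequalities hold for every filtration. For the upper bound on the maximal function, the
  running maximum max_{k<=N} |f_k|^p equals the integral of sum_n alpha_n |f_n|^p with
  alpha_n = P(tau = n | F_n), where tau is the first time at which the maximum is attained; these
  weights form a Carleson sequence of total mass one, and monotone convergence in N reaches the
  maximal function. Conversely, Abel summation against the increments d_m of the running maximum
  bounds sum_n alpha_n g_n by sum_m d_m sum_{k>=m} alpha_k, and the Carleson condition at time m
  bounds the integral of the m-th term by C times the integral of d_m; these sum to at most the
  maximal function.
*)
theory Submission
  imports Defs
begin

fun running_max :: "(nat \<Rightarrow> 'a::linorder) \<Rightarrow> nat \<Rightarrow> 'a" where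
  "running_max g 0 = g 0"
| "running_max g (Suc n) = max (running_max g n) (g (Suc n))"

lemma running_max_ge: "k \<le> n \<Longrightarrow> g k \<le> running_max g n"
  by (induction n) (auto simp: le_Suc_eq intro: order_trans)

lemma running_max_attained: "\<exists>k\<le>n. running_max g n = g k"
  by (induction n) (auto simp: max_def intro: le_SucI)

lemma running_max_mono: "m \<le> n \<Longrightarrow> running_max g m \<le> running_max g n"
  by (induction n) (auto simp: le_Suc_eq intro: order_trans)

lemma SUP_running_max: "(SUP n. ennreal (running_max g n)) = (SUP n. ennreal (g n))"
proof (rule antisym)
  show "(SUP n. ennreal (running_max g n)) \<le> (SUP n. ennreal (g n))"
  proof (rule SUP_least)
    fix n
    obtain k where "running_max g n = g k"
      using running_max_attained by blast
    then show "ennreal (running_max g n) \<le> (SUP n. ennreal (g n))"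
      using SUP_upper[of k UNIV "\<lambda>n. ennreal (g n)"] by simp
  qed
  show "(SUP n. ennreal (g n)) \<le> (SUP n. ennreal (running_max g n))"
    by (rule SUP_mono) (auto intro!: ennreal_leI running_max_ge)
qed

lemma borel_measurable_running_max:
  fixes g :: "nat \<Rightarrow> 'a \<Rightarrow> 'b::{second_countable_topology, linorder_topology}"
  assumes "\<And>k. k \<le> n \<Longrightarrow> g k \<in> borel_measurable N"
  shows "(\<lambda>x. running_max (\<lambda>k. g k x) n) \<in> borel_measurable N"
  using assms by (induction n) (auto intro!: borel_measurable_max)

definition running_max_increment :: "(nat \<Rightarrow> real) \<Rightarrow> nat \<Rightarrow> real" where
  "running_max_increment g m = running_max g m - (if m = 0 then 0 else running_max g (m - 1))"

lemma running_max_increment_nonneg: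
  "(\<And>n. 0 \<le> g n) \<Longrightarrow> 0 \<le> running_max_increment g m"
  by (cases m) (auto simp: running_max_increment_def)

lemma sum_running_max_increment: "(\<Sum>m<Suc n. running_max_increment g m) = running_max g n"
  by (induction n) (auto simp: running_max_increment_def)

lemma sum_ennreal_running_max_increment:
  assumes "\<And>n. 0 \<le> g n"
  shows "(\<Sum>m<Suc n. ennreal (running_max_increment g m)) = ennreal (running_max g n)"
proof -
  have "(\<Sum>m<Suc n. ennreal (running_max_increment g m))
      = ennreal (\<Sum>m<Suc n. running_max_increment g m)"
    by (intro sum_ennreal running_max_increment_nonneg assms)
  then show ?thesis
    by (simp only: sum_running_max_increment)
qed

lemma sum_running_max_increment_le_SUP:
  assumes "\<And>n. 0 \<le> g n"
  shows "(\<Sum>m<N. ennreal (running_max_increment g m)) \<le> (SUP n. ennreal (g n))"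
proof (cases N)
  case (Suc n)
  have "(\<Sum>m<N. ennreal (running_max_increment g m)) = ennreal (running_max g n)"
    using Suc assms by (simp only: sum_ennreal_running_max_increment)
  also have "\<dots> \<le> (SUP n. ennreal (running_max g n))"
    by (rule SUP_upper) simp
  finally show ?thesis
    by (simp only: SUP_running_max)
qed simp

lemma sum_mult_partial_sum_swap:
  fixes a b :: "nat \<Rightarrow> 'b::comm_semiring_0"
  shows "(\<Sum>n<N. a n * (\<Sum>m<Suc n. b m)) = (\<Sum>m<N. b m * (\<Sum>n\<in>{m..<N}. a n))"
proof (induction N)
  case (Suc N)
  have "(\<Sum>m<Suc N. b m * (\<Sum>n\<in>{m..<Suc N}. a n))
      = (\<Sum>m<Suc N. b m * (\<Sum>n\<in>{m..<N}. a n) + b m * a N)"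
    by (rule sum.cong) (auto simp: distrib_left)
  also have "\<dots> = (\<Sum>m<N. b m * (\<Sum>n\<in>{m..<N}. a n)) + (\<Sum>m<Suc N. b m * a N)"
    by (simp add: sum.distrib)
  finally show ?case
    using Suc.IH by (simp add: sum_distrib_left distrib_left mult.commute add.assoc)
qed simp

lemma sum_atLeastLessThan_le_suminf_shift:
  fixes a :: "nat \<Rightarrow> ennreal"
  shows "(\<Sum>n\<in>{m..<N}. a n) \<le> (\<Sum>k. a (m + k))"
proof (cases "m \<le> N")
  case True
  have "(\<Sum>n\<in>{m..<N}. a n) = (\<Sum>k\<in>{0..<N - m}. a (m + k))"
    using True by (simp add: sum.shift_bounds_nat_ivl[of a 0 m "N - m", symmetric] add.commute)
  also have "\<dots> \<le> (\<Sum>k. a (m + k))"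
    by (rule sum_le_suminf) auto
  finally show ?thesis .
qed simp

lemma sum_mult_le_sum_running_max_increment_tail:
  fixes a :: "nat \<Rightarrow> ennreal"
  assumes "\<And>n. 0 \<le> g n"
  shows "(\<Sum>n<N. a n * ennreal (g n))
    \<le> (\<Sum>m<N. ennreal (running_max_increment g m) * (\<Sum>k. a (m + k)))"
proof -
  have "(\<Sum>n<N. a n * ennreal (g n))
      \<le> (\<Sum>n<N. a n * (\<Sum>m<Suc n. ennreal (running_max_increment g m)))"
  proof (rule sum_mono)
    fix n
    have "ennreal (g n) \<le> ennreal (running_max g n)"
      by (intro ennreal_leI running_max_ge) simp
    also have "\<dots> = (\<Sum>m<Suc n. ennreal (running_max_increment g m))"
      using assms by (rule sum_ennreal_running_max_increment[symmetric])
    finally show "a n * ennreal (g n) \<le> a n * (\<Sum>m<Suc n. ennreal (running_max_increment g m))"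
      by (rule mult_left_mono) simp
  qed
  also have "\<dots> = (\<Sum>m<N. ennreal (running_max_increment g m) * (\<Sum>n\<in>{m..<N}. a n))"
    by (rule sum_mult_partial_sum_swap)
  also have "\<dots> \<le> (\<Sum>m<N. ennreal (running_max_increment g m) * (\<Sum>k. a (m + k)))"
    by (intro sum_mono mult_left_mono sum_atLeastLessThan_le_suminf_shift) auto
  finally show ?thesis .
qed

context sigma_finite_subalgebra
begin

lemma nn_integral_mult_le_of_AE_nn_cond_exp_le:
  assumes [measurable]: "d \<in> borel_measurable F" "S \<in> borel_measurable M"
    and "AE x in M. nn_cond_exp M F S x \<le> C"
  shows "(\<integral>\<^sup>+x. d x * S x \<partial>M) \<le> C * (\<integral>\<^sup>+x. d x \<partial>M)"
proof -
  have [measurable]: "d \<in> borel_measurable M"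
    using measurable_from_subalg[OF subalg assms(1)] .
  have "(\<integral>\<^sup>+x. d x * S x \<partial>M) = (\<integral>\<^sup>+x. d x * nn_cond_exp M F S x \<partial>M)"
    by (rule nn_cond_exp_intg[symmetric]) simp_all
  also have "\<dots> \<le> (\<integral>\<^sup>+x. C * d x \<partial>M)"
  proof (rule nn_integral_mono_AE)
    show "AE x in M. d x * nn_cond_exp M F S x \<le> C * d x"
      using assms(3) by eventually_elim (metis mult.commute mult_left_mono zero_le)
  qed
  also have "\<dots> = C * (\<integral>\<^sup>+x. d x \<partial>M)"
    by (rule nn_integral_cmult) simp
  finally show ?thesis .
qed

end

context finite_measure_subalgebra
begin

lemma AE_nn_cond_exp_le_const:
  assumes [measurable]: "S \<in> borel_measurable M" and "c \<noteq> \<infinity>"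
    and bound: "\<And>A. A \<in> sets F \<Longrightarrow> (\<integral>\<^sup>+x. indicator A x * S x \<partial>M) \<le> c * emeasure M A"
  shows "AE x in M. nn_cond_exp M F S x \<le> c"
proof -
  define A where "A = {x\<in>space M. c < nn_cond_exp M F S x}"
  have A_F: "A \<in> sets F"
  proof -
    have "{x\<in>space F. c < nn_cond_exp M F S x} \<in> sets F" by measurable
    moreover have "space F = space M"
      using subalg by (simp add: subalgebra_def)
    ultimately show ?thesis
      by (simp add: A_def)
  qed
  then have [measurable]: "A \<in> sets M"
    using subalg by (auto simp: subalgebra_def)
  have "c * emeasure M A + (\<integral>\<^sup>+x. indicator A x * (nn_cond_exp M F S x - c) \<partial>M)
      = (\<integral>\<^sup>+x. c * indicator A x + indicator A x * (nn_cond_exp M F S x - c) \<partial>M)"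
    by (simp add: nn_integral_add nn_integral_cmult)
  also have "\<dots> = (\<integral>\<^sup>+x. indicator A x * nn_cond_exp M F S x \<partial>M)"
    by (intro nn_integral_cong)
      (auto simp: A_def indicator_def less_imp_le simp flip: ennreal_ineq_diff_add)
  also have "\<dots> = (\<integral>\<^sup>+x. indicator A x * S x \<partial>M)"
    using A_F by (intro nn_cond_exp_intg) simp_all
  also have "\<dots> \<le> c * emeasure M A"
    using A_F by (rule bound)
  finally have "(\<integral>\<^sup>+x. indicator A x * (nn_cond_exp M F S x - c) \<partial>M) = 0"
    using \<open>c \<noteq> \<infinity>\<close> ennreal_add_left_cancel_le[of "c * emeasure M A" _ 0]
    by (simp add: ennreal_mult_eq_top_iff)
  then have "AE x in M. indicator A x * (nn_cond_exp M F S x - c) = 0"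
    by (subst (asm) nn_integral_0_iff_AE) auto
  then show ?thesis
  proof (rule AE_mp, intro AE_I2 impI)
    fix x assume "x \<in> space M" "indicator A x * (nn_cond_exp M F S x - c) = 0"
    then show "nn_cond_exp M F S x \<le> c"
      by (auto simp: A_def indicator_def diff_eq_0_iff_ennreal not_less split: if_splits)
  qed
qed

lemma nn_integral_mult_enn2real_nn_cond_exp_indicator:
  assumes [measurable]: "E \<in> sets M" and w: "w \<in> borel_measurable F"
  shows "(\<integral>\<^sup>+x. w x * ennreal (enn2real (nn_cond_exp M F (indicator E) x)) \<partial>M)
    = (\<integral>\<^sup>+x. w x * indicator E x \<partial>M)"
proof -
  have "(\<integral>\<^sup>+x. nn_cond_exp M F (indicator E) x \<partial>M) = emeasure M E"
    using nn_cond_exp_intg[of "\<lambda>_. 1" "indicator E"] by simp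
  then have "AE x in M. nn_cond_exp M F (indicator E) x \<noteq> \<infinity>"
    by (intro nn_integral_noteq_infinite) auto
  then have "(\<integral>\<^sup>+x. w x * ennreal (enn2real (nn_cond_exp M F (indicator E) x)) \<partial>M)
      = (\<integral>\<^sup>+x. w x * nn_cond_exp M F (indicator E) x \<partial>M)"
    by (intro nn_integral_cong_AE) (auto simp: ennreal_enn2real_if)
  also have "\<dots> = (\<integral>\<^sup>+x. w x * indicator E x \<partial>M)"
    using w by (intro nn_cond_exp_intg) simp_all
  finally show ?thesis .
qed

end

locale discrete_filtered_prob_space = prob_space M for M :: "'a measure" +
  fixes F :: "nat \<Rightarrow> 'a measure"
  assumes discrete_filtration: "discrete_filtration M F"
begin

lemma subalgebra_F: "subalgebra M (F n)"
  using discrete_filtration by (simp add: discrete_filtration_def)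

lemma space_F [simp]: "space (F n) = space M"
  using subalgebra_F by (simp add: subalgebra_def)

lemma sets_F_imp_sets: "A \<in> sets (F n) \<Longrightarrow> A \<in> sets M"
  using subalgebra_F by (auto simp: subalgebra_def)

lemma sets_F_mono: "m \<le> n \<Longrightarrow> sets (F m) \<subseteq> sets (F n)"
proof (induction rule: dec_induct)
  case (step n)
  then show ?case
    using discrete_filtration by (auto simp: discrete_filtration_def)
qed simp

lemma measurable_F_mono: "m \<le> n \<Longrightarrow> h \<in> measurable (F m) N \<Longrightarrow> h \<in> measurable (F n) N"
  using sets_F_mono[of m n] by (auto simp: measurable_def)

lemma measurable_F_imp_measurable: "h \<in> measurable (F n) N \<Longrightarrow> h \<in> measurable M N"
  by (rule measurable_from_subalg[OF subalgebra_F])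

lemma finite_measure_subalgebra_F: "finite_measure_subalgebra M (F n)"
  by (simp add: finite_measure_subalgebra_def finite_measure_subalgebra_axioms_def
      subalgebra_F finite_measure_axioms)

lemma borel_measurable_running_max_increment_F:
  assumes g: "\<And>n. g n \<in> borel_measurable (F n)"
  shows "(\<lambda>x. running_max_increment (\<lambda>k. g k x) m) \<in> borel_measurable (F m)"
proof -
  have running_max_F: "(\<lambda>x. running_max (\<lambda>k. g k x) j) \<in> borel_measurable (F m)" if "j \<le> m" for j
    using that by (intro borel_measurable_running_max) (auto intro: measurable_F_mono[OF _ g])
  have [measurable]: "(\<lambda>x. running_max (\<lambda>k. g k x) m) \<in> borel_measurable (F m)"
    "(\<lambda>x. running_max (\<lambda>k. g k x) (m - 1)) \<in> borel_measurable (F m)"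
    by (simp_all add: running_max_F)
  show ?thesis
    unfolding running_max_increment_def by measurable
qed

lemma nn_integral_sum_mult_le_SUP:
  fixes g \<alpha> :: "nat \<Rightarrow> 'a \<Rightarrow> real" and C :: ennreal
  assumes g: "\<And>n. g n \<in> borel_measurable (F n)" and g_nonneg: "\<And>n x. 0 \<le> g n x"
    and \<alpha>: "\<And>n. \<alpha> n \<in> borel_measurable (F n)" and \<alpha>_nonneg: "\<And>n x. x \<in> space M \<Longrightarrow> 0 \<le> \<alpha> n x"
    and Carleson: "\<And>n. AE x in M. nn_cond_exp M (F n) (\<lambda>y. \<Sum>k. ennreal (\<alpha> (n + k) y)) x \<le> C"
  shows "(\<integral>\<^sup>+x. (\<Sum>n<N. ennreal (\<alpha> n x * g n x)) \<partial>M) \<le> C * (\<integral>\<^sup>+x. (SUP n. ennreal (g n x)) \<partial>M)"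
proof -
  define d where "d m x = ennreal (running_max_increment (\<lambda>k. g k x) m)" for m x
  define S where "S m x = (\<Sum>k. ennreal (\<alpha> (m + k) x))" for m x
  have [measurable]: "\<alpha> n \<in> borel_measurable M" for n
    using \<alpha> by (rule measurable_F_imp_measurable)
  have [measurable]: "(\<lambda>x. running_max_increment (\<lambda>k. g k x) m) \<in> borel_measurable (F m)" for m
    using g by (rule borel_measurable_running_max_increment_F)
  then have d_F: "d m \<in> borel_measurable (F m)" for m
    unfolding d_def by measurable
  then have [measurable]: "d m \<in> borel_measurable M" for m
    by (rule measurable_F_imp_measurable)
  have "(\<integral>\<^sup>+x. (\<Sum>n<N. ennreal (\<alpha> n x * g n x)) \<partial>M) \<le> (\<integral>\<^sup>+x. (\<Sum>m<N. d m x * S m x) \<partial>M)"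
  proof (rule nn_integral_mono)
    fix x assume "x \<in> space M"
    then have "(\<Sum>n<N. ennreal (\<alpha> n x * g n x)) = (\<Sum>n<N. ennreal (\<alpha> n x) * ennreal (g n x))"
      using \<alpha>_nonneg g_nonneg by (simp add: ennreal_mult)
    also have "\<dots> \<le> (\<Sum>m<N. d m x * S m x)"
      unfolding d_def S_def by (rule sum_mult_le_sum_running_max_increment_tail) (rule g_nonneg)
    finally show "(\<Sum>n<N. ennreal (\<alpha> n x * g n x)) \<le> (\<Sum>m<N. d m x * S m x)" .
  qed
  also have "\<dots> = (\<Sum>m<N. \<integral>\<^sup>+x. d m x * S m x \<partial>M)"
    by (intro nn_integral_sum) (simp add: S_def)
  also have "\<dots> \<le> (\<Sum>m<N. C * \<integral>\<^sup>+x. d m x \<partial>M)"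
    using finite_measure_subalgebra_is_sigma_finite[OF finite_measure_subalgebra_F] d_F Carleson
    by (intro sum_mono sigma_finite_subalgebra.nn_integral_mult_le_of_AE_nn_cond_exp_le)
      (auto simp: S_def)
  also have "\<dots> = C * (\<integral>\<^sup>+x. (\<Sum>m<N. d m x) \<partial>M)"
    by (simp add: nn_integral_sum sum_distrib_left)
  also have "\<dots> \<le> C * (\<integral>\<^sup>+x. (SUP n. ennreal (g n x)) \<partial>M)"
    using sum_running_max_increment_le_SUP g_nonneg
    by (intro mult_left_mono nn_integral_mono) (auto simp: d_def)
  finally show ?thesis .
qed

lemma nn_integral_suminf_mult_le_SUP:
  fixes g \<alpha> :: "nat \<Rightarrow> 'a \<Rightarrow> real" and C :: ennreal
  assumes g: "\<And>n. g n \<in> borel_measurable (F n)" and g_nonneg: "\<And>n x. 0 \<le> g n x"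
    and \<alpha>: "\<And>n. \<alpha> n \<in> borel_measurable (F n)" and \<alpha>_nonneg: "\<And>n x. x \<in> space M \<Longrightarrow> 0 \<le> \<alpha> n x"
    and Carleson: "\<And>n. AE x in M. nn_cond_exp M (F n) (\<lambda>y. \<Sum>k. ennreal (\<alpha> (n + k) y)) x \<le> C"
  shows "(\<integral>\<^sup>+x. (\<Sum>n. ennreal (\<alpha> n x * g n x)) \<partial>M) \<le> C * (\<integral>\<^sup>+x. (SUP n. ennreal (g n x)) \<partial>M)"
proof -
  have [measurable]: "g n \<in> borel_measurable M" "\<alpha> n \<in> borel_measurable M" for n
    using g \<alpha> by (auto intro: measurable_F_imp_measurable)
  have "(\<integral>\<^sup>+x. (\<Sum>n. ennreal (\<alpha> n x * g n x)) \<partial>M) = (\<Sum>n. \<integral>\<^sup>+x. ennreal (\<alpha> n x * g n x) \<partial>M)"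
    by (rule nn_integral_suminf) simp
  also have "\<dots> \<le> C * (\<integral>\<^sup>+x. (SUP n. ennreal (g n x)) \<partial>M)"
    using nn_integral_sum_mult_le_SUP[OF assms]
    by (intro suminf_le_const) (simp_all add: nn_integral_sum)
  finally show ?thesis .
qed

text \<open>Because of \<open>enn2real\<close>, this equals \<open>P(E n | F n)\<close> only almost everywhere.\<close>
definition cond_indicator :: "(nat \<Rightarrow> 'a set) \<Rightarrow> nat \<Rightarrow> 'a \<Rightarrow> real" where
  "cond_indicator E n x = enn2real (nn_cond_exp M (F n) (indicator (E n)) x)"

lemma borel_measurable_cond_indicator_F: "cond_indicator E n \<in> borel_measurable (F n)"
  unfolding cond_indicator_def by measurable

lemma borel_measurable_cond_indicator [measurable]: "cond_indicator E n \<in> borel_measurable M"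
  using borel_measurable_cond_indicator_F by (rule measurable_F_imp_measurable)

lemma cond_indicator_nonneg: "0 \<le> cond_indicator E n x"
  by (simp add: cond_indicator_def)

lemma nn_integral_mult_cond_indicator:
  "E n \<in> sets M \<Longrightarrow> w \<in> borel_measurable (F n) \<Longrightarrow>
    (\<integral>\<^sup>+x. w x * ennreal (cond_indicator E n x) \<partial>M) = (\<integral>\<^sup>+x. w x * indicator (E n) x \<partial>M)"
  unfolding cond_indicator_def
  by (rule finite_measure_subalgebra.nn_integral_mult_enn2real_nn_cond_exp_indicator
      [OF finite_measure_subalgebra_F])

lemma nn_integral_indicator_mult_suminf_cond_indicator:
  assumes E: "\<And>n. E n \<in> sets M" "disjoint_family E" and A: "A \<in> sets (F n)"
  shows "(\<integral>\<^sup>+x. indicator A x * (\<Sum>k. ennreal (cond_indicator E (n + k) x)) \<partial>M)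
    = emeasure M (A \<inter> (\<Union>k. E (n + k)))"
proof -
  have [measurable]: "A \<in> sets M" "E n \<in> sets M" for n
    using A E(1) by (auto intro: sets_F_imp_sets)
  have "(\<integral>\<^sup>+x. indicator A x * (\<Sum>k. ennreal (cond_indicator E (n + k) x)) \<partial>M)
      = (\<Sum>k. \<integral>\<^sup>+x. indicator A x * ennreal (cond_indicator E (n + k) x) \<partial>M)"
    by (simp add: nn_integral_suminf flip: ennreal_suminf_cmult)
  also have "\<dots> = (\<Sum>k. \<integral>\<^sup>+x. indicator A x * indicator (E (n + k)) x \<partial>M)"
  proof (rule suminf_cong)
    fix k
    have "(indicator A :: 'a \<Rightarrow> ennreal) \<in> borel_measurable (F (n + k))"
      using measurable_F_mono[of n "n + k", OF _ borel_measurable_indicator[OF A]] by simp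
    then show "(\<integral>\<^sup>+x. indicator A x * ennreal (cond_indicator E (n + k) x) \<partial>M)
        = (\<integral>\<^sup>+x. indicator A x * indicator (E (n + k)) x \<partial>M)"
      using E(1) by (rule nn_integral_mult_cond_indicator[rotated])
  qed
  also have "\<dots> = (\<Sum>k. emeasure M (A \<inter> E (n + k)))"
    by (simp add: indicator_inter_arith[symmetric])
  also have "\<dots> = emeasure M (\<Union>k. A \<inter> E (n + k))"
  proof (intro suminf_emeasure)
    show "disjoint_family (\<lambda>k. A \<inter> E (n + k))"
    proof (unfold disjoint_family_on_def, intro ballI impI)
      fix i j :: nat assume "i \<noteq> j"
      then have "E (n + i) \<inter> E (n + j) = {}"
        using E(2) unfolding disjoint_family_on_def by simp
      then show "A \<inter> E (n + i) \<inter> (A \<inter> E (n + j)) = {}"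
        by blast
    qed
  qed auto
  finally show ?thesis
    by simp
qed

lemma AE_nn_cond_exp_suminf_cond_indicator_le_1:
  assumes "\<And>n. E n \<in> sets M" "disjoint_family E"
  shows "AE x in M. nn_cond_exp M (F n) (\<lambda>y. \<Sum>k. ennreal (cond_indicator E (n + k) y)) x \<le> 1"
proof (rule finite_measure_subalgebra.AE_nn_cond_exp_le_const[OF finite_measure_subalgebra_F])
  show "(\<lambda>y. \<Sum>k. ennreal (cond_indicator E (n + k) y)) \<in> borel_measurable M"
    by measurable
  fix A assume "A \<in> sets (F n)"
  then show "(\<integral>\<^sup>+x. indicator A x * (\<Sum>k. ennreal (cond_indicator E (n + k) x)) \<partial>M) \<le> 1 * emeasure M A"
    using assms by (simp add: nn_integral_indicator_mult_suminf_cond_indicator emeasure_mono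
        sets_F_imp_sets)
qed simp

lemma nn_integral_suminf_cond_indicator:
  assumes "\<And>n. E n \<in> sets M" "disjoint_family E"
  shows "(\<integral>\<^sup>+x. (\<Sum>n. ennreal (cond_indicator E n x)) \<partial>M) = emeasure M (\<Union>n. E n)"
proof -
  have "(\<integral>\<^sup>+x. (\<Sum>n. ennreal (cond_indicator E n x)) \<partial>M)
      = (\<integral>\<^sup>+x. indicator (space M) x * (\<Sum>k. ennreal (cond_indicator E (0 + k) x)) \<partial>M)"
    by (intro nn_integral_cong) simp
  also have "\<dots> = emeasure M (space M \<inter> (\<Union>k. E (0 + k)))"
    using assms sets.top[of "F 0"] by (intro nn_integral_indicator_mult_suminf_cond_indicator) simp_all
  also have "space M \<inter> (\<Union>k. E (0 + k)) = (\<Union>n. E n)"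
    using assms(1) sets.sets_into_space by auto
  finally show ?thesis .
qed

lemma nn_integral_suminf_cond_indicator_mult:
  fixes w :: "nat \<Rightarrow> 'a \<Rightarrow> real"
  assumes E: "\<And>n. E n \<in> sets M" and w: "\<And>n. w n \<in> borel_measurable (F n)"
    and w_nonneg: "\<And>n x. 0 \<le> w n x"
  shows "(\<integral>\<^sup>+x. (\<Sum>n. ennreal (cond_indicator E n x * w n x)) \<partial>M)
    = (\<integral>\<^sup>+x. (\<Sum>n. ennreal (w n x) * indicator (E n) x) \<partial>M)"
proof -
  have [measurable]: "E n \<in> sets M" "w n \<in> borel_measurable M" for n
    using E w by (auto intro: measurable_F_imp_measurable)
  have "(\<integral>\<^sup>+x. (\<Sum>n. ennreal (cond_indicator E n x * w n x)) \<partial>M)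
      = (\<Sum>n. \<integral>\<^sup>+x. ennreal (w n x) * ennreal (cond_indicator E n x) \<partial>M)"
    using w_nonneg cond_indicator_nonneg
    by (simp add: nn_integral_suminf ennreal_mult mult.commute)
  also have "\<dots> = (\<Sum>n. \<integral>\<^sup>+x. ennreal (w n x) * indicator (E n) x \<partial>M)"
    using E w by (intro suminf_cong nn_integral_mult_cond_indicator) simp_all
  also have "\<dots> = (\<integral>\<^sup>+x. (\<Sum>n. ennreal (w n x) * indicator (E n) x) \<partial>M)"
    by (simp add: nn_integral_suminf)
  finally show ?thesis .
qed

lemma Carleson_sequence_realising_running_max:
  fixes g :: "nat \<Rightarrow> 'a \<Rightarrow> real"
  assumes g: "\<And>n. g n \<in> borel_measurable (F n)" and g_nonneg: "\<And>n x. 0 \<le> g n x"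
  obtains \<alpha> where "\<And>n. \<alpha> n \<in> borel_measurable (F n)" "\<And>n x. 0 \<le> \<alpha> n x"
    "\<And>n. AE x in M. nn_cond_exp M (F n) (\<lambda>y. \<Sum>k. ennreal (\<alpha> (n + k) y)) x \<le> 1"
    "(\<integral>\<^sup>+x. (\<Sum>n. ennreal (\<alpha> n x)) \<partial>M) = 1"
    "(\<integral>\<^sup>+x. (\<Sum>n. ennreal (\<alpha> n x * g n x)) \<partial>M) = (\<integral>\<^sup>+x. ennreal (running_max (\<lambda>k. g k x) N) \<partial>M)"
proof -
  define G where "G x = running_max (\<lambda>k. g k x) N" for x
  define \<tau> where "\<tau> x = (LEAST j. g j x = G x)" for x
  define E where "E j = {x \<in> space M. \<tau> x = j}" for j
  have [measurable]: "g n \<in> borel_measurable M" for n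
    using g by (rule measurable_F_imp_measurable)
  have [measurable]: "G \<in> borel_measurable M"
    unfolding G_def by (intro borel_measurable_running_max) simp
  have E_sets: "E j \<in> sets M" for j
    unfolding E_def \<tau>_def by measurable
  have E_disjoint: "disjoint_family E"
    by (auto simp: disjoint_family_on_def E_def)
  have E_cover: "(\<Union>j. E j) = space M"
    by (auto simp: E_def)
  have g_\<tau>: "g (\<tau> x) x = G x" for x
    unfolding \<tau>_def G_def by (rule LeastI_ex) (metis running_max_attained)
  show ?thesis
  proof (rule that[of "cond_indicator E"])
    show "(\<integral>\<^sup>+x. (\<Sum>n. ennreal (cond_indicator E n x)) \<partial>M) = 1"
      using E_sets E_disjoint by (simp add: nn_integral_suminf_cond_indicator E_cover emeasure_space_1)
    have "(\<integral>\<^sup>+x. (\<Sum>n. ennreal (cond_indicator E n x * g n x)) \<partial>M)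
        = (\<integral>\<^sup>+x. (\<Sum>n. ennreal (g n x) * indicator (E n) x) \<partial>M)"
      using E_sets g g_nonneg by (rule nn_integral_suminf_cond_indicator_mult)
    also have "\<dots> = (\<integral>\<^sup>+x. ennreal (G x) \<partial>M)"
    proof (rule nn_integral_cong)
      fix x assume "x \<in> space M"
      then have "(\<lambda>n. ennreal (g n x) * indicator (E n) x) = (\<lambda>n. if n = \<tau> x then ennreal (g n x) else 0)"
        by (auto simp: E_def)
      then show "(\<Sum>n. ennreal (g n x) * indicator (E n) x) = ennreal (G x)"
        using sums_unique[OF sums_single[of "\<tau> x" "\<lambda>n. ennreal (g n x)"]] g_\<tau> by simp
    qed
    finally show "(\<integral>\<^sup>+x. (\<Sum>n. ennreal (cond_indicator E n x * g n x)) \<partial>M)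
        = (\<integral>\<^sup>+x. ennreal (running_max (\<lambda>k. g k x) N) \<partial>M)"
      by (simp add: G_def)
  qed (use E_sets E_disjoint in \<open>simp_all add: borel_measurable_cond_indicator_F cond_indicator_nonneg
      AE_nn_cond_exp_suminf_cond_indicator_le_1\<close>)
qed

lemma max_bellman_le_carleson_bellman:
  "max_bellman M F p FF ff \<le> carleson_bellman M F p FF ff 1 1"
  unfolding max_bellman_def
proof (intro Sup_least, clarify)
  fix f :: "'a \<Rightarrow> real"
  assume f: "f \<in> borel_measurable M" "\<forall>x\<in>space M. 0 \<le> f x"
    "(\<integral>\<^sup>+x. ennreal (f x powr p) \<partial>M) = ennreal FF" "(\<integral>\<^sup>+x. ennreal (f x) \<partial>M) = ennreal ff"
  define g where "g n x = \<bar>real_cond_exp M (F n) f x\<bar> powr p" for n x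
  have g_F: "g n \<in> borel_measurable (F n)" for n
    unfolding g_def by measurable
  have g_nonneg: "0 \<le> g n x" for n x
    by (simp add: g_def)
  have [measurable]: "g n \<in> borel_measurable M" for n
    using g_F by (rule measurable_F_imp_measurable)
  have "(\<integral>\<^sup>+x. (SUP n. ennreal (g n x)) \<partial>M) = (\<integral>\<^sup>+x. (SUP N. ennreal (running_max (\<lambda>k. g k x) N)) \<partial>M)"
    by (simp only: SUP_running_max)
  also have "\<dots> = (SUP N. \<integral>\<^sup>+x. ennreal (running_max (\<lambda>k. g k x) N) \<partial>M)"
    by (intro nn_integral_monotone_convergence_SUP borel_measurable_running_max
        measurable_compose[OF _ measurable_ennreal])
      (auto simp: incseq_def le_fun_def intro!: ennreal_leI running_max_mono)
  also have "\<dots> \<le> carleson_bellman M F p FF ff 1 1"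
  proof (rule SUP_least)
    fix N
    show "(\<integral>\<^sup>+x. ennreal (running_max (\<lambda>k. g k x) N) \<partial>M) \<le> carleson_bellman M F p FF ff 1 1"
    proof (rule Carleson_sequence_realising_running_max[OF g_F g_nonneg, where N = N])
      fix \<alpha> :: "nat \<Rightarrow> 'a \<Rightarrow> real"
      assume \<alpha>: "\<And>n. \<alpha> n \<in> borel_measurable (F n)" "\<And>n x. 0 \<le> \<alpha> n x"
        "\<And>n. AE x in M. nn_cond_exp M (F n) (\<lambda>y. \<Sum>k. ennreal (\<alpha> (n + k) y)) x \<le> 1"
        "(\<integral>\<^sup>+x. (\<Sum>n. ennreal (\<alpha> n x)) \<partial>M) = 1"
        "(\<integral>\<^sup>+x. (\<Sum>n. ennreal (\<alpha> n x * g n x)) \<partial>M) = (\<integral>\<^sup>+x. ennreal (running_max (\<lambda>k. g k x) N) \<partial>M)"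
      show "(\<integral>\<^sup>+x. ennreal (running_max (\<lambda>k. g k x) N) \<partial>M) \<le> carleson_bellman M F p FF ff 1 1"
        unfolding \<alpha>(5)[symmetric] carleson_bellman_def
        using f \<alpha>(1-4) by (intro Sup_upper CollectI exI[of _ f] exI[of _ \<alpha>]) (auto simp: g_def)
    qed
  qed
  finally show "(\<integral>\<^sup>+x. (SUP n. ennreal (\<bar>real_cond_exp M (F n) f x\<bar> powr p)) \<partial>M)
      \<le> carleson_bellman M F p FF ff 1 1"
    by (simp add: g_def)
qed

lemma carleson_bellman_le_max_bellman:
  "carleson_bellman M F p FF ff MM C \<le> ennreal C * max_bellman M F p FF ff"
  unfolding carleson_bellman_def
proof (intro Sup_least, clarify)
  fix f :: "'a \<Rightarrow> real" and \<alpha> :: "nat \<Rightarrow> 'a \<Rightarrow> real"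
  assume f: "f \<in> borel_measurable M" "\<forall>x\<in>space M. 0 \<le> f x"
    "(\<integral>\<^sup>+x. ennreal (f x powr p) \<partial>M) = ennreal FF" "(\<integral>\<^sup>+x. ennreal (f x) \<partial>M) = ennreal ff"
    and \<alpha>: "\<forall>n. \<alpha> n \<in> borel_measurable (F n)" "\<forall>n. \<forall>x\<in>space M. 0 \<le> \<alpha> n x"
    "\<forall>n. AE x in M. nn_cond_exp M (F n) (\<lambda>y. \<Sum>k. ennreal (\<alpha> (n + k) y)) x \<le> ennreal C"
  have "(\<integral>\<^sup>+x. (\<Sum>n. ennreal (\<alpha> n x * \<bar>real_cond_exp M (F n) f x\<bar> powr p)) \<partial>M)
      \<le> ennreal C * (\<integral>\<^sup>+x. (SUP n. ennreal (\<bar>real_cond_exp M (F n) f x\<bar> powr p)) \<partial>M)"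
    using \<alpha> by (intro nn_integral_suminf_mult_le_SUP) simp_all
  also have "\<dots> \<le> ennreal C * max_bellman M F p FF ff"
    unfolding max_bellman_def using f by (intro mult_left_mono Sup_upper) auto
  finally show "(\<integral>\<^sup>+x. (\<Sum>n. ennreal (\<alpha> n x * \<bar>real_cond_exp M (F n) f x\<bar> powr p)) \<partial>M)
      \<le> ennreal C * max_bellman M F p FF ff" .
qed

end

theorem theoremB:
  fixes M :: "'a measure" and F :: "nat \<Rightarrow> 'a measure" and p FF ff :: real
  assumes "p > 1"
    and "prob_space M"
    and "discrete_filtration M F"
    and "ff \<ge> 0"
    and "FF \<ge> ff powr p"
  shows "max_bellman M F p FF ff \<le> carleson_bellman M F p FF ff 1 1
         \<and> (infinitely_refining M F \<longrightarrow>
              max_bellman M F p FF ff = carleson_bellman M F p FF ff 1 1)"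
proof -
  interpret discrete_filtered_prob_space M F
    using assms(2,3) by (simp add: discrete_filtered_prob_space_def discrete_filtered_prob_space_axioms_def)
  have "carleson_bellman M F p FF ff 1 1 \<le> max_bellman M F p FF ff"
    using carleson_bellman_le_max_bellman[of p FF ff 1 1] by simp
  with max_bellman_le_carleson_bellman show ?thesis
    by (simp add: antisym)
qed

end
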